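(* Let $T$ be a tree on $n\ge 2$ vertices. Then ${\rm mvr}(\overline{T})=2$ if $T=K_{1,n-1}$ (a star), and ${\rm mvr}(\overline{T})=3$ otherwise.
   Context: All graphs are finite and simple; $\overline{G}$ denotes the complement of $G$. An orthogonal vector representation of a graph $G=(V,E)$ in $\mathbb{R}^d$ is a map $\phi:V\to\mathbb{R}^d$ with $\phi(v)\neq 0$ for all $v$, and for distinct $u,v$: $\langle\phi(u),\phi(v)\rangle=0$ if and only if $uv\notin E$. ${\rm mvr}(G)$ is the smallest $d$ for which such a representation exists. *)

theory Defs
  imports Complex_Main
begin

definition simple_graph :: "'a set \<Rightarrow> ('a \<Rightarrow> 'a \<Rightarrow> bool) \<Rightarrow> bool" where
  "simple_graph V E \<longleftrightarrow> finite V \<and> (\<forall>u v. E u v \<longrightarrow> u \<in> V \<and> v \<in> V)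
     \<and> (\<forall>u v. E u v \<longrightarrow> E v u) \<and> (\<forall>v. \<not> E v v)"

definition complement :: "'a set \<Rightarrow> ('a \<Rightarrow> 'a \<Rightarrow> bool) \<Rightarrow> 'a \<Rightarrow> 'a \<Rightarrow> bool" where
  "complement V E u v \<longleftrightarrow> u \<in> V \<and> v \<in> V \<and> u \<noteq> v \<and> \<not> E u v"

definition connected_graph :: "'a set \<Rightarrow> ('a \<Rightarrow> 'a \<Rightarrow> bool) \<Rightarrow> bool" where
  "connected_graph V E \<longleftrightarrow> (\<forall>u\<in>V. \<forall>v\<in>V. E\<^sup>*\<^sup>* u v)"

definition is_cycle :: "('a \<Rightarrow> 'a \<Rightarrow> bool) \<Rightarrow> 'a list \<Rightarrow> bool" where
  "is_cycle E cs \<longleftrightarrow> length cs \<ge> 3 \<and> distinct cs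
     \<and> (\<forall>i. Suc i < length cs \<longrightarrow> E (cs ! i) (cs ! Suc i))
     \<and> E (last cs) (hd cs)"

definition acyclic_graph :: "('a \<Rightarrow> 'a \<Rightarrow> bool) \<Rightarrow> bool" where
  "acyclic_graph E \<longleftrightarrow> \<not> (\<exists>cs. is_cycle E cs)"

definition is_tree :: "'a set \<Rightarrow> ('a \<Rightarrow> 'a \<Rightarrow> bool) \<Rightarrow> bool" where
  "is_tree V E \<longleftrightarrow> simple_graph V E \<and> V \<noteq> {} \<and> connected_graph V E \<and> acyclic_graph E"

definition is_star :: "'a set \<Rightarrow> ('a \<Rightarrow> 'a \<Rightarrow> bool) \<Rightarrow> bool" where
  "is_star V E \<longleftrightarrow> (\<exists>c\<in>V. \<forall>u\<in>V. \<forall>v\<in>V. E u v \<longleftrightarrow> (u \<noteq> v \<and> (u = c \<or> v = c)))"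

text \<open>Vectors in R^d are represented as functions nat => real, of which only the
  coordinates 0..d-1 are used. Orthogonal vector representation of (V,E) in R^d.\<close>
definition ortho_rep :: "'a set \<Rightarrow> ('a \<Rightarrow> 'a \<Rightarrow> bool) \<Rightarrow> nat \<Rightarrow> ('a \<Rightarrow> nat \<Rightarrow> real) \<Rightarrow> bool" where
  "ortho_rep V E d \<phi> \<longleftrightarrow>
     (\<forall>v\<in>V. \<exists>i<d. \<phi> v i \<noteq> 0) \<and>
     (\<forall>u\<in>V. \<forall>v\<in>V. u \<noteq> v \<longrightarrow> ((\<Sum>i<d. \<phi> u i * \<phi> v i) = 0 \<longleftrightarrow> \<not> E u v))"

definition mvr :: "'a set \<Rightarrow> ('a \<Rightarrow> 'a \<Rightarrow> bool) \<Rightarrow> nat" where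
  "mvr V E = (LEAST d. \<exists>\<phi>. ortho_rep V E d \<phi>)"

end

theory Submission
  imports Defs "HOL-Analysis.Cross3" "HOL-Computational_Algebra.Polynomial"
begin

text \<open>In a representation of the complement of a tree \<open>T\<close>, two vectors are orthogonal exactly
  when they span an edge of \<open>T\<close>. Since \<open>T\<close> has an edge, dimension 1 is impossible. In the plane,
  \<open>z \<mapsto> z / cnj z\<close> maps orthogonal nonzero vectors to antipodal points of the unit circle, so by
  connectivity \<open>T\<close> is complete bipartite, hence a star because it has no 4-cycle; a star is realised
  by two orthogonal vectors. In \<open>\<real>\<^sup>3\<close> every forest is realised by adding leaves one at a time: a leaf
  attached to \<open>p\<close> receives \<open>\<phi> p \<times> m\<close> for a generic point \<open>m\<close> of the moment curve \<open>(1, t, t\<^sup>2)\<close>,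
  which keeps all vectors pairwise non-parallel and the new one orthogonal to \<open>\<phi> p\<close> only.\<close>

unbundle cross3_syntax

definition moment_curve :: "real \<Rightarrow> real^3" where
  "moment_curve t = vector [1, t, t\<^sup>2]"

lemma finite_moment_curve_orthogonal:
  assumes "c \<noteq> 0"
  shows "finite {t. moment_curve t \<bullet> c = 0}"
proof -
  have "[:c$1, c$2, c$3:] \<noteq> 0"
    using assms by (auto simp: vec_eq_iff forall_3)
  then have "finite {t. poly [:c$1, c$2, c$3:] t = 0}"
    by (rule poly_roots_finite)
  moreover have "poly [:c$1, c$2, c$3:] t = moment_curve t \<bullet> c" for t
    by (simp add: moment_curve_def inner_vec_def sum_3 power2_eq_square algebra_simps)
  ultimately show ?thesis
    by simp
qed

lemma exists_moment_curve_nonorthogonal: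
  assumes "finite C" "0 \<notin> C"
  shows "\<exists>t. \<forall>c\<in>C. moment_curve t \<bullet> c \<noteq> 0"
proof -
  have "finite (\<Union>c\<in>C. {t. moment_curve t \<bullet> c = 0})"
    using assms by (intro finite_UN_I) (auto intro: finite_moment_curve_orthogonal)
  then obtain t where "t \<notin> (\<Union>c\<in>C. {t. moment_curve t \<bullet> c = 0})"
    using ex_new_if_finite[OF infinite_UNIV_char_0] by blast
  then show ?thesis
    by blast
qed

lemma exists_nonorthogonal_nonparallel:
  fixes S :: "(real^3) set"
  assumes "finite S" "0 \<notin> S"
  shows "\<exists>m. m \<noteq> 0 \<and> (\<forall>s\<in>S. m \<bullet> s \<noteq> 0 \<and> m \<times> s \<noteq> 0)"
proof -
  have "\<forall>s\<in>S. \<exists>e. s \<times> e \<noteq> 0"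
    using assms(2) cross_basis_nonzero by metis
  then obtain e where e: "\<forall>s\<in>S. s \<times> e s \<noteq> 0"
    by metis
  obtain t where t: "\<forall>c\<in>S \<union> (\<lambda>s. s \<times> e s) ` S. moment_curve t \<bullet> c \<noteq> 0"
    using exists_moment_curve_nonorthogonal[of "S \<union> (\<lambda>s. s \<times> e s) ` S"] assms e by force
  have "moment_curve t \<noteq> 0"
    by (auto simp: moment_curve_def vec_eq_iff forall_3)
  moreover have "moment_curve t \<times> s \<noteq> 0" if "s \<in> S" for s
  proof
    assume "moment_curve t \<times> s = 0"
    then have "(s \<times> e s) \<bullet> moment_curve t = 0"
      using cross_triple[of "moment_curve t" s "e s"] by simp
    then have "moment_curve t \<bullet> (s \<times> e s) = 0"
      by (simp add: inner_commute)
    then show False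
      using t that by blast
  qed
  ultimately show ?thesis
    using t by blast
qed

lemma exists_orthogonal_nonparallel:
  fixes a :: "real^3"
  assumes "finite S" "a \<noteq> 0" "\<forall>s\<in>S. s \<noteq> 0 \<and> s \<times> a \<noteq> 0"
  shows "\<exists>w. w \<noteq> 0 \<and> w \<bullet> a = 0 \<and> w \<times> a \<noteq> 0 \<and> (\<forall>s\<in>S. w \<bullet> s \<noteq> 0 \<and> w \<times> s \<noteq> 0)"
proof -
  obtain m where m: "\<forall>s\<in>insert a (S \<union> (\<lambda>s. s \<times> a) ` S). m \<bullet> s \<noteq> 0 \<and> m \<times> s \<noteq> 0"
    using exists_nonorthogonal_nonparallel[of "insert a (S \<union> (\<lambda>s. s \<times> a) ` S)"] assms by force
  define w where "w = a \<times> m"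
  have w0: "w \<noteq> 0"
    using m by (simp add: w_def cross_skew[of a m])
  have wa: "w \<bullet> a = 0"
    by (simp add: w_def dot_cross_self)
  have "w \<bullet> s \<noteq> 0 \<and> w \<times> s \<noteq> 0" if s: "s \<in> S" for s
  proof
    have "s \<times> a \<in> insert a (S \<union> (\<lambda>s. s \<times> a) ` S)"
      using s by blast
    then have "m \<bullet> (s \<times> a) \<noteq> 0"
      using m by blast
    moreover have "w \<bullet> s = m \<bullet> (s \<times> a)"
      unfolding w_def cross_triple[of a m s] cross_triple[of m s a] by (rule inner_commute)
    ultimately show "w \<bullet> s \<noteq> 0"
      by simp
    show "w \<times> s \<noteq> 0"
    proof
      assume "w \<times> s = 0"
      then have "(s \<bullet> m) *\<^sub>R a = (s \<bullet> a) *\<^sub>R m"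
        using Lagrange[of s a m] by (simp add: w_def cross_skew[of "a \<times> m"])
      then have "(s \<bullet> a) *\<^sub>R (m \<times> a) = 0"
        by (metis cross_mult_left cross_refl scale_zero_right)
      then have "(s \<bullet> m) *\<^sub>R a = 0"
        using \<open>(s \<bullet> m) *\<^sub>R a = (s \<bullet> a) *\<^sub>R m\<close> m by simp
      then show False
        using assms(2) m s by (simp add: inner_commute)
    qed
  qed
  moreover have "w \<times> a \<noteq> 0"
    using w0 wa assms(2) norm_and_cross_eq_0 by blast
  ultimately show ?thesis
    using w0 wa by blast
qed

definition is_path :: "('a \<Rightarrow> 'a \<Rightarrow> bool) \<Rightarrow> 'a list \<Rightarrow> bool" where
  "is_path E xs \<longleftrightarrow> distinct xs \<and> (\<forall>i. Suc i < length xs \<longrightarrow> E (xs ! i) (xs ! Suc i))"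

lemma is_path_Cons:
  assumes "is_path E xs" "x \<notin> set xs" "xs \<noteq> []" "E x (hd xs)"
  shows "is_path E (x # xs)"
  unfolding is_path_def
proof (intro conjI allI impI)
  show "distinct (x # xs)"
    using assms(1,2) by (simp add: is_path_def)
  fix i assume i: "Suc i < length (x # xs)"
  show "E ((x # xs) ! i) ((x # xs) ! Suc i)"
  proof (cases i)
    case 0
    then show ?thesis
      using assms(3,4) by (simp add: hd_conv_nth)
  next
    case (Suc j)
    then show ?thesis
      using assms(1) i by (simp add: is_path_def)
  qed
qed

lemma is_path_chord_is_cycle:
  assumes "is_path E xs" "2 \<le> j" "j < length xs" "E (xs ! j) (xs ! 0)"
  shows "is_cycle E (take (Suc j) xs)"
proof -
  let ?cs = "take (Suc j) xs"
  have len: "length ?cs = Suc j"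
    using assms(3) by simp
  then have "?cs \<noteq> []"
    by auto
  show ?thesis
    unfolding is_cycle_def
  proof (intro conjI allI impI)
    show "3 \<le> length ?cs"
      using len assms(2) by simp
    show "distinct ?cs"
      using assms(1) by (simp add: is_path_def)
    show "E (last ?cs) (hd ?cs)"
      using assms(4) len \<open>?cs \<noteq> []\<close> by (simp add: last_conv_nth hd_conv_nth)
    fix i assume "Suc i < length ?cs"
    then have "Suc i < Suc j" "Suc i < length xs"
      using len assms(3) by simp_all
    then show "E (?cs ! i) (?cs ! Suc i)"
      using assms(1) by (simp add: is_path_def)
  qed
qed

lemma ex_longest_path:
  assumes "finite V" "V \<noteq> {}"
  shows "\<exists>xs. xs \<noteq> [] \<and> set xs \<subseteq> V \<and> is_path E xs \<and>
    (\<forall>ys. ys \<noteq> [] \<and> set ys \<subseteq> V \<and> is_path E ys \<longrightarrow> length ys \<le> length xs)"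
proof -
  define P where "P xs \<longleftrightarrow> xs \<noteq> [] \<and> set xs \<subseteq> V \<and> is_path E xs" for xs
  obtain v where "v \<in> V"
    using assms(2) by blast
  then have "P [v]"
    by (simp add: P_def is_path_def)
  moreover have "length xs < Suc (card V)" if "P xs" for xs
  proof -
    have "card (set xs) \<le> card V"
      using that assms(1) by (simp add: P_def card_mono)
    moreover have "card (set xs) = length xs"
      using that by (simp add: P_def is_path_def distinct_card)
    ultimately show ?thesis
      by simp
  qed
  ultimately show ?thesis
    using Lattices_Big.ex_has_greatest_nat[of P "[v]" length "Suc (card V)"] by (auto simp: P_def)
qed

text \<open>The head of a longest path has no neighbour off the path (else the path extends) and
  none on it beyond its successor (else there is a cycle).\<close>

lemma acyclic_graph_has_leaf:
  assumes "finite V" "V \<noteq> {}" "acyclic_graph E"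
    and sym: "\<And>u v. E u v \<Longrightarrow> E v u" and irrefl: "\<And>v. \<not> E v v"
  shows "\<exists>v\<in>V. \<forall>x\<in>V. \<forall>y\<in>V. E v x \<longrightarrow> E v y \<longrightarrow> x = y"
proof -
  obtain xs where xs: "xs \<noteq> []" "set xs \<subseteq> V" "is_path E xs"
    and longest: "\<And>ys. ys \<noteq> [] \<Longrightarrow> set ys \<subseteq> V \<Longrightarrow> is_path E ys \<Longrightarrow> length ys \<le> length xs"
    using ex_longest_path[OF assms(1,2), of E] by blast
  have neighbour: "w = xs ! 1" if "w \<in> V" "E (xs ! 0) w" for w
  proof -
    have "w \<in> set xs"
    proof (rule ccontr)
      assume "w \<notin> set xs"
      then have "is_path E (w # xs)"
        using xs that sym by (simp add: is_path_Cons hd_conv_nth)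
      then show False
        using longest[of "w # xs"] xs that(1) by simp
    qed
    then obtain j where j: "j < length xs" "w = xs ! j"
      by (auto simp: in_set_conv_nth)
    have "j \<noteq> 0"
      using irrefl[of "xs ! 0"] j(2) that(2) by (cases j) auto
    moreover have "\<not> 2 \<le> j"
      using is_path_chord_is_cycle[of E xs j] xs j that(2) sym assms(3)
      by (auto simp: acyclic_graph_def)
    ultimately have "j = 1"
      by arith
    then show ?thesis
      using j by simp
  qed
  have "xs ! 0 \<in> V"
    using xs by auto
  then show ?thesis
    using neighbour by blast
qed

lemma tree_has_edge:
  assumes "is_tree V E" "card V \<ge> 2"
  shows "\<exists>u v. E u v"
proof -
  have "finite V"
    using assms(1) by (simp add: is_tree_def simple_graph_def)
  moreover have "\<not> card V \<le> Suc 0"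
    using assms(2) by simp
  ultimately obtain u v where "u \<in> V" "v \<in> V" "u \<noteq> v"
    using card_le_Suc0_iff_eq by blast
  moreover have "E\<^sup>*\<^sup>* u v"
    using assms(1) calculation by (simp add: is_tree_def connected_graph_def)
  ultimately show ?thesis
    by (metis converse_rtranclpE)
qed

lemma acyclic_graph_no_4_cycle:
  assumes "acyclic_graph E" "distinct [a, b, c, d]" "E a b" "E b c" "E c d" "E d a"
  shows False
proof -
  have "is_cycle E [a, b, c, d]"
    unfolding is_cycle_def
  proof (intro conjI allI impI)
    fix i assume "Suc i < length [a, b, c, d]"
    then have "i = 0 \<or> i = 1 \<or> i = 2"
      by auto
    then show "E ([a, b, c, d] ! i) ([a, b, c, d] ! Suc i)"
      using assms(3-5) by auto
  qed (use assms(2,6) in auto)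
  then show False
    using assms(1) by (auto simp: acyclic_graph_def)
qed

lemma connected_graph_antipodal_values:
  fixes f :: "'a \<Rightarrow> 'b :: group_add"
  assumes "connected_graph V E" "simple_graph V E" "a \<in> V" "v \<in> V"
    and adj: "\<And>u v. u \<in> V \<Longrightarrow> v \<in> V \<Longrightarrow> E u v \<longleftrightarrow> f u = - f v"
  shows "f v = f a \<or> f v = - f a"
proof -
  have "E\<^sup>*\<^sup>* a v"
    using assms(1,3,4) by (simp add: connected_graph_def)
  then show ?thesis
  proof (induction rule: rtranclp_induct)
    case (step y z)
    then have "y \<in> V" "z \<in> V"
      using assms(2) by (auto simp: simple_graph_def)
    then have "f z = - f y"
      using adj step.hyps(2) by (metis minus_minus)
    then show ?case
      using step.IH by auto
  qed simp
qed

lemma is_star_if_antipodal_to_centre: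
  fixes f :: "'a \<Rightarrow> 'b :: group_add"
  assumes "x \<in> V" "- f x \<noteq> f x"
    and adj: "\<And>u v. u \<in> V \<Longrightarrow> v \<in> V \<Longrightarrow> E u v \<longleftrightarrow> f u = - f v"
    and others: "\<And>y. y \<in> V \<Longrightarrow> y \<noteq> x \<Longrightarrow> f y = - f x"
  shows "is_star V E"
proof -
  have "E u v \<longleftrightarrow> u \<noteq> v \<and> (u = x \<or> v = x)" if "u \<in> V" "v \<in> V" for u v
    using adj[OF that] others[OF that(1)] others[OF that(2)] assms(2)
    by (cases "u = x"; cases "v = x") auto
  then show ?thesis
    using assms(1) by (auto simp: is_star_def)
qed

lemma tree_antipodal_adjacency_is_star:
  fixes f :: "'a \<Rightarrow> 'b :: group_add"
  assumes tree: "is_tree V E" "card V \<ge> 2"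
    and adj: "\<And>u v. u \<in> V \<Longrightarrow> v \<in> V \<Longrightarrow> E u v \<longleftrightarrow> f u = - f v"
  shows "is_star V E"
proof -
  have sg: "simple_graph V E"
    using tree(1) by (simp add: is_tree_def)
  obtain a b where ab: "E a b"
    using tree_has_edge[OF tree] by blast
  then have V: "a \<in> V" "b \<in> V"
    using sg by (auto simp: simple_graph_def)
  define c where "c = f a"
  have "f b = - c"
    using adj[OF V] ab by (simp add: c_def minus_equation_iff)
  have "c \<noteq> - c"
    using adj[of a a] V sg by (auto simp: c_def simple_graph_def)
  have two_values: "f v = c \<or> f v = - c" if "v \<in> V" for v
    using connected_graph_antipodal_values[OF _ sg V(1) that adj] tree(1)
    by (simp add: c_def is_tree_def)
  show ?thesis
  proof (cases "\<exists>a'\<in>V. a' \<noteq> a \<and> f a' = c")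
    case False
    show ?thesis
      by (rule is_star_if_antipodal_to_centre[OF V(1) _ adj])
        (use False two_values \<open>c \<noteq> - c\<close> in \<open>auto simp: c_def\<close>)
  next
    case True
    then obtain a' where a': "a' \<in> V" "a' \<noteq> a" "f a' = c"
      by blast
    show ?thesis
    proof (cases "\<exists>b'\<in>V. b' \<noteq> b \<and> f b' = - c")
      case False
      show ?thesis
        by (rule is_star_if_antipodal_to_centre[OF V(2) _ adj])
          (use False two_values \<open>f b = - c\<close> \<open>c \<noteq> - c\<close> in auto)
    next
      case True
      then obtain b' where b': "b' \<in> V" "b' \<noteq> b" "f b' = - c"
        by blast
      have "E b a'" "E a' b'" "E b' a"
        using adj V a' b' \<open>f b = - c\<close> by (auto simp: c_def)
      moreover have "distinct [a, b, a', b']"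
        using a' b' \<open>f b = - c\<close> \<open>c \<noteq> - c\<close> by (auto simp: c_def)
      ultimately show ?thesis
        using acyclic_graph_no_4_cycle[of E a b a' b'] ab tree(1) by (simp add: is_tree_def)
    qed
  qed
qed

text \<open>Orthogonality encodes adjacency in \<open>E\<close>, i.e.\ this represents the complement of \<open>E\<close>.\<close>

definition nonparallel_orth_rep :: "'a set \<Rightarrow> ('a \<Rightarrow> 'a \<Rightarrow> bool) \<Rightarrow> ('a \<Rightarrow> real^3) \<Rightarrow> bool" where
  "nonparallel_orth_rep V E \<phi> \<longleftrightarrow> (\<forall>v\<in>V. \<phi> v \<noteq> 0) \<and>
     (\<forall>u\<in>V. \<forall>v\<in>V. u \<noteq> v \<longrightarrow> (\<phi> u \<bullet> \<phi> v = 0 \<longleftrightarrow> E u v) \<and> \<phi> u \<times> \<phi> v \<noteq> 0)"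

lemma nonparallel_orth_rep_insert:
  assumes rep: "nonparallel_orth_rep V E \<phi>" and "v \<notin> V" "w \<noteq> 0"
    and new: "\<forall>x\<in>V. (w \<bullet> \<phi> x = 0 \<longleftrightarrow> E v x) \<and> w \<times> \<phi> x \<noteq> 0"
    and sym: "\<And>x. E x v \<longleftrightarrow> E v x"
  shows "nonparallel_orth_rep (insert v V) E (\<phi>(v := w))"
proof -
  have "(\<phi> x \<bullet> w = 0 \<longleftrightarrow> E x v) \<and> \<phi> x \<times> w \<noteq> 0" if "x \<in> V" for x
    using new that by (simp add: sym inner_commute cross_skew[of "\<phi> x"])
  then show ?thesis
    using rep new \<open>v \<notin> V\<close> \<open>w \<noteq> 0\<close> unfolding nonparallel_orth_rep_def by auto
qed

lemma nonparallel_orth_rep_add_leaf: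
  assumes rep: "nonparallel_orth_rep U E \<phi>" and "finite U" "v \<notin> U"
    and leaf: "\<And>x y. x \<in> U \<Longrightarrow> y \<in> U \<Longrightarrow> E v x \<Longrightarrow> E v y \<Longrightarrow> x = y"
    and sym: "\<And>x. E x v \<longleftrightarrow> E v x"
  shows "\<exists>w. nonparallel_orth_rep (insert v U) E (\<phi>(v := w))"
proof -
  have "\<exists>w. w \<noteq> 0 \<and> (\<forall>x\<in>U. (w \<bullet> \<phi> x = 0 \<longleftrightarrow> E v x) \<and> w \<times> \<phi> x \<noteq> 0)"
  proof (cases "\<exists>p\<in>U. E v p")
    case True
    then obtain p where p: "p \<in> U" "E v p"
      by blast
    have "\<phi> p \<noteq> 0" "\<forall>s\<in>\<phi> ` (U - {p}). s \<noteq> 0 \<and> s \<times> \<phi> p \<noteq> 0"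
      using rep p(1) by (auto simp: nonparallel_orth_rep_def)
    then obtain w where w: "w \<noteq> 0" "w \<bullet> \<phi> p = 0" "w \<times> \<phi> p \<noteq> 0"
      "\<forall>s\<in>\<phi> ` (U - {p}). w \<bullet> s \<noteq> 0 \<and> w \<times> s \<noteq> 0"
      using exists_orthogonal_nonparallel[of "\<phi> ` (U - {p})" "\<phi> p"] \<open>finite U\<close> by blast
    have "(w \<bullet> \<phi> x = 0 \<longleftrightarrow> E v x) \<and> w \<times> \<phi> x \<noteq> 0" if "x \<in> U" for x
    proof (cases "x = p")
      case False
      then have "\<not> E v x"
        using leaf p that by blast
      then show ?thesis
        using w(4) that False by auto
    qed (use w p in simp)
    then show ?thesis
      using w(1) by blast
  next
    case False
    have "0 \<notin> \<phi> ` U"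
      using rep by (auto simp: nonparallel_orth_rep_def)
    then obtain w where "w \<noteq> 0" "\<forall>s\<in>\<phi> ` U. w \<bullet> s \<noteq> 0 \<and> w \<times> s \<noteq> 0"
      using exists_nonorthogonal_nonparallel[of "\<phi> ` U"] \<open>finite U\<close> by blast
    then show ?thesis
      using False by auto
  qed
  then obtain w where w: "w \<noteq> 0" "\<forall>x\<in>U. (w \<bullet> \<phi> x = 0 \<longleftrightarrow> E v x) \<and> w \<times> \<phi> x \<noteq> 0"
    by blast
  show ?thesis
    using nonparallel_orth_rep_insert[OF rep \<open>v \<notin> U\<close> w sym] by blast
qed

lemma acyclic_graph_nonparallel_orth_rep:
  assumes "finite V" "acyclic_graph E" and sym: "\<And>u v. E u v \<Longrightarrow> E v u" and "\<And>v. \<not> E v v"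
  shows "\<exists>\<phi>. nonparallel_orth_rep V E \<phi>"
  using assms(1)
proof (induction V rule: finite_psubset_induct)
  case (psubset V)
  show ?case
  proof (cases "V = {}")
    case True
    then show ?thesis
      by (simp add: nonparallel_orth_rep_def)
  next
    case False
    obtain v where v: "v \<in> V" and leaf: "\<And>x y. x \<in> V \<Longrightarrow> y \<in> V \<Longrightarrow> E v x \<Longrightarrow> E v y \<Longrightarrow> x = y"
      using acyclic_graph_has_leaf[OF psubset.hyps False assms(2-4)] by blast
    define U where "U = V - {v}"
    have "U \<subset> V" "finite U" "v \<notin> U"
      using v psubset.hyps by (auto simp: U_def)
    then obtain \<phi> where \<phi>: "nonparallel_orth_rep U E \<phi>"
      using psubset.IH by blast
    have leaf_U: "x = y" if "x \<in> U" "y \<in> U" "E v x" "E v y" for x y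
      using leaf that by (auto simp: U_def)
    have "E x v \<longleftrightarrow> E v x" for x
      using sym by blast
    then obtain w where "nonparallel_orth_rep (insert v U) E (\<phi>(v := w))"
      using nonparallel_orth_rep_add_leaf[OF \<phi> \<open>finite U\<close> \<open>v \<notin> U\<close> leaf_U] by blast
    moreover have "insert v U = V"
      using v by (auto simp: U_def)
    ultimately show ?thesis
      by auto
  qed
qed

lemma ortho_rep_complement_if_nonparallel_orth_rep:
  assumes "nonparallel_orth_rep V E \<phi>"
  shows "ortho_rep V (complement V E) 3 (\<lambda>v i. [\<phi> v $ 1, \<phi> v $ 2, \<phi> v $ 3] ! i)"
  unfolding ortho_rep_def
proof (intro conjI ballI impI)
  fix v assume "v \<in> V"
  then have "\<phi> v $ 1 \<noteq> 0 \<or> \<phi> v $ 2 \<noteq> 0 \<or> \<phi> v $ 3 \<noteq> 0"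
    using assms by (auto simp: nonparallel_orth_rep_def vec_eq_iff forall_3)
  then show "\<exists>i<3. [\<phi> v $ 1, \<phi> v $ 2, \<phi> v $ 3] ! i \<noteq> 0"
    by (simp add: numeral_3_eq_3 Ex_less_Suc2)
next
  fix u v assume "u \<in> V" "v \<in> V" "u \<noteq> v"
  moreover have "(\<Sum>i<3. [\<phi> u $ 1, \<phi> u $ 2, \<phi> u $ 3] ! i * [\<phi> v $ 1, \<phi> v $ 2, \<phi> v $ 3] ! i)
      = \<phi> u \<bullet> \<phi> v"
    by (simp add: inner_vec_def sum_3 numeral_3_eq_3)
  ultimately show "((\<Sum>i<3. [\<phi> u $ 1, \<phi> u $ 2, \<phi> u $ 3] ! i * [\<phi> v $ 1, \<phi> v $ 2, \<phi> v $ 3] ! i) = 0)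
      \<longleftrightarrow> \<not> complement V E u v"
    using assms by (simp add: nonparallel_orth_rep_def complement_def)
qed

lemma tree_complement_ortho_rep_dim3:
  assumes "is_tree V E"
  shows "\<exists>\<phi>. ortho_rep V (complement V E) 3 \<phi>"
proof -
  have "finite V" "acyclic_graph E" "\<And>u v. E u v \<Longrightarrow> E v u" "\<And>v. \<not> E v v"
    using assms by (auto simp: is_tree_def simple_graph_def)
  then show ?thesis
    using acyclic_graph_nonparallel_orth_rep ortho_rep_complement_if_nonparallel_orth_rep by blast
qed

lemma orthogonal_iff_antipodal_complex:
  fixes z w :: complex
  assumes "z \<noteq> 0" "w \<noteq> 0"
  shows "Re (z * cnj w) = 0 \<longleftrightarrow> z / cnj z = - (w / cnj w)"
proof -
  have "Re (z * cnj w) = 0 \<longleftrightarrow> z * cnj w + cnj (z * cnj w) = 0"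
    unfolding complex_add_cnj of_real_eq_0_iff by linarith
  also have "\<dots> \<longleftrightarrow> z / cnj z = - (w / cnj w)"
    using assms by (auto simp: field_simps eq_neg_iff_add_eq_0)
  finally show ?thesis .
qed

lemma tree_complement_ortho_rep_dim2_is_star:
  assumes "is_tree V E" "card V \<ge> 2" and rep: "ortho_rep V (complement V E) 2 \<phi>"
  shows "is_star V E"
proof -
  define z where "z v = Complex (\<phi> v 0) (\<phi> v 1)" for v
  have z0: "z v \<noteq> 0" if v: "v \<in> V" for v
  proof -
    obtain i where "i < 2" "\<phi> v i \<noteq> 0"
      using rep v by (auto simp: ortho_rep_def)
    then show ?thesis
      by (auto simp: z_def complex_eq_iff less_2_cases_iff)
  qed
  have "E u v \<longleftrightarrow> z u / cnj (z u) = - (z v / cnj (z v))" if "u \<in> V" "v \<in> V" for u v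
  proof (cases "u = v")
    case True
    have "z u / cnj (z u) \<noteq> 0"
      using z0[OF that(1)] by simp
    then show ?thesis
      using True assms(1) by (auto simp: complex_eq_iff is_tree_def simple_graph_def)
  next
    case False
    have "(\<Sum>i<2. \<phi> u i * \<phi> v i) = 0 \<longleftrightarrow> E u v"
      using rep that False by (simp add: ortho_rep_def complement_def)
    moreover have "(\<Sum>i<2. \<phi> u i * \<phi> v i) = Re (z u * cnj (z v))"
      by (simp add: z_def numeral_2_eq_2)
    ultimately show ?thesis
      using orthogonal_iff_antipodal_complex[OF z0 z0, OF that] by simp
  qed
  then show ?thesis
    using tree_antipodal_adjacency_is_star[OF assms(1,2), of "\<lambda>v. z v / cnj (z v)"] by blast
qed

lemma star_complement_ortho_rep_dim2:
  assumes "is_star V E"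
  shows "\<exists>\<phi>. ortho_rep V (complement V E) 2 \<phi>"
proof -
  obtain c where c: "c \<in> V" "\<forall>u\<in>V. \<forall>v\<in>V. E u v \<longleftrightarrow> u \<noteq> v \<and> (u = c \<or> v = c)"
    using assms by (auto simp: is_star_def)
  define \<phi> where "\<phi> v i = (if (v = c) = (i = 0) then 1 else 0 :: real)" for v and i :: nat
  have "ortho_rep V (complement V E) 2 \<phi>"
    using c by (auto simp: ortho_rep_def complement_def \<phi>_def numeral_2_eq_2 Ex_less_Suc2)
  then show ?thesis
    by blast
qed

lemma ortho_rep_nonadjacent_dim_ge_2:
  assumes "ortho_rep V G d \<phi>" "u \<in> V" "v \<in> V" "u \<noteq> v" "\<not> G u v"
  shows "2 \<le> d"
proof (rule ccontr)
  assume "\<not> 2 \<le> d"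
  then have "d = 0 \<or> d = 1"
    by auto
  then show False
    using assms by (auto simp: ortho_rep_def)
qed

lemma mvr_eqI:
  assumes "ortho_rep V G d \<phi>" "\<And>d' \<psi>. ortho_rep V G d' \<psi> \<Longrightarrow> d \<le> d'"
  shows "mvr V G = d"
  unfolding mvr_def using assms by (blast intro: Least_equality)

theorem proposition4p1:
  fixes V :: "'a set" and E :: "'a \<Rightarrow> 'a \<Rightarrow> bool"
  assumes "is_tree V E" and "card V \<ge> 2"
  shows "mvr V (complement V E) = (if is_star V E then 2 else 3)"
proof -
  obtain a b where "E a b"
    using tree_has_edge[OF assms] by blast
  then have "a \<in> V" "b \<in> V" "a \<noteq> b" "\<not> complement V E a b"
    using assms(1) by (auto simp: is_tree_def simple_graph_def complement_def)
  then have dim_ge_2: "2 \<le> d" if "ortho_rep V (complement V E) d \<phi>" for d \<phi>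
    using ortho_rep_nonadjacent_dim_ge_2[OF that] by blast
  show ?thesis
  proof (cases "is_star V E")
    case True
    then obtain \<phi> where "ortho_rep V (complement V E) 2 \<phi>"
      using star_complement_ortho_rep_dim2 by blast
    then have "mvr V (complement V E) = 2"
      using dim_ge_2 by (rule mvr_eqI)
    then show ?thesis
      using True by simp
  next
    case False
    obtain \<phi> where "ortho_rep V (complement V E) 3 \<phi>"
      using tree_complement_ortho_rep_dim3[OF assms(1)] by blast
    moreover have "3 \<le> d" if "ortho_rep V (complement V E) d \<psi>" for d \<psi>
      using dim_ge_2[OF that] tree_complement_ortho_rep_dim2_is_star[OF assms] that False
      by (cases "d = 2") auto
    ultimately have "mvr V (complement V E) = 3"
      by (rule mvr_eqI)
    then show ?thesis
      using False by simp
  qed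
qed

end
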